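(* Let $X_1,X_2,\dots$ be i.i.d. nonnegative random variables with regularly varying tail of index $\gamma\in(0,1)$, i.e. $P(X_1>t)=L(t)t^{-\gamma}$ with $L$ slowly varying at infinity. Then for every $p\in(0,1)$ and every $\varepsilon>0$ there exists $C>0$ such that for all $n\in\mathbb N$, $$E\Big[\Big(\sum_{j=1}^n\Big(\frac{X_j}{n^{1/\gamma}}\wedge n^{-p/\gamma}\Big)\Big)^2\Big]\le Cn^{-p(\frac1\gamma-1)+\varepsilon}.$$
   Context: A function $L:\mathbb R_+\to\mathbb R_+$ is slowly varying at infinity if $L(at)/L(t)\to1$ as $t\to\infty$ for every $a>0$. *)

theory Defs
  imports "HOL-Probability.Probability"
begin

definition slowly_varying :: "(real \<Rightarrow> real) \<Rightarrow> bool" where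
  "slowly_varying L \<longleftrightarrow> (\<forall>t>0. L t > 0) \<and>
     (\<forall>a>0. ((\<lambda>t. L (a * t) / L t) \<longlongrightarrow> 1) at_top)"

end

theory Submission
  imports Defs
begin

text \<open>
  By Potter's bound, the regularly varying tail satisfies \<open>P(X > t) \<le> K t powr (-\<beta>)\<close>
  for every \<open>\<beta> < \<gamma>\<close>. Cutting \<open>[0, a]\<close> into dyadic layers turns such a bound into
  \<open>E (min Z a) \<le> c K a powr (1 - \<beta>)\<close> when \<open>\<beta> < 1\<close>. For \<open>n\<close> independent summands with
  values in \<open>[0, a]\<close> and means at most \<open>m\<close>, the second moment of the sum is at most
  \<open>n a m + (n m)\<^sup>2\<close>. With \<open>a = n powr (-p/\<gamma>)\<close> and the scaling \<open>b = n powr (1/\<gamma>)\<close>,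
  \<open>n m\<close> is of order \<open>n powr e\<close> with \<open>e = 1 - p (1 - \<beta>)/\<gamma> - \<beta>/\<gamma>\<close>, which exceeds the
  target exponent \<open>-p (1/\<gamma> - 1)\<close> by \<open>(1 - p) (1 - \<beta>/\<gamma>)\<close>; choosing \<open>\<beta>\<close> close to \<open>\<gamma>\<close>
  makes this at most \<open>\<epsilon>/2\<close>.
\<close>

lemma slowly_varying_eventually_le:
  assumes "slowly_varying L" "a > 0" "c > 1"
  shows "eventually (\<lambda>t. L (a * t) \<le> c * L t) at_top"
proof -
  have pos: "\<And>t. t > 0 \<Longrightarrow> L t > 0" and lim: "((\<lambda>t. L (a * t) / L t) \<longlongrightarrow> 1) at_top"
    using assms(1,2) unfolding slowly_varying_def by auto
  have "eventually (\<lambda>t. L (a * t) / L t < c) at_top"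
    by (rule order_tendstoD(2)[OF lim \<open>c > 1\<close>])
  moreover have "eventually (\<lambda>t. L t > 0) at_top"
    using eventually_gt_at_top[of 0] by (rule eventually_mono) (rule pos)
  ultimately show ?thesis
    by eventually_elim (simp add: divide_less_eq)
qed

lemma doubling_decay_imp_powr_bound:
  fixes F :: "real \<Rightarrow> real"
  assumes bounded: "\<And>t. t > 0 \<Longrightarrow> F t \<le> B" and "0 \<le> B" and "0 \<le> \<beta>" and "t\<^sub>0 > 0"
    and doubling: "\<And>t. t \<ge> t\<^sub>0 \<Longrightarrow> F (2 * t) \<le> 2 powr (-\<beta>) * F t"
    and "t > 0"
  shows "F t \<le> B * (2 * t\<^sub>0) powr \<beta> * t powr (-\<beta>)"
proof -
  have small: "F t \<le> B * (2 * t\<^sub>0) powr \<beta> * t powr (-\<beta>)" if "0 < t" "t < 2 * t\<^sub>0" for t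
  proof -
    have "1 \<le> (2 * t\<^sub>0 / t) powr \<beta>"
      using that \<open>0 \<le> \<beta>\<close> by (intro ge_one_powr_ge_zero) auto
    then have "B * 1 \<le> B * (2 * t\<^sub>0 / t) powr \<beta>"
      using \<open>0 \<le> B\<close> by (rule mult_left_mono)
    also have "\<dots> = B * (2 * t\<^sub>0) powr \<beta> * t powr (-\<beta>)"
      using that \<open>t\<^sub>0 > 0\<close> by (simp add: powr_divide powr_minus_divide)
    finally show ?thesis
      using bounded[OF \<open>0 < t\<close>] by simp
  qed
  have "F t \<le> B * (2 * t\<^sub>0) powr \<beta> * t powr (-\<beta>)" if "0 < t" "t < 2 ^ k * t\<^sub>0" for k t
    using that
  proof (induction k arbitrary: t)
    case 0
    then show ?case using small \<open>t\<^sub>0 > 0\<close> by simp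
  next
    case (Suc k)
    show ?case
    proof (cases "t < 2 * t\<^sub>0")
      case True
      then show ?thesis using small Suc.prems by blast
    next
      case False
      have "F t = F (2 * (t / 2))" by simp
      also have "\<dots> \<le> 2 powr (-\<beta>) * F (t / 2)"
        using False by (intro doubling) simp
      also have "\<dots> \<le> 2 powr (-\<beta>) * (B * (2 * t\<^sub>0) powr \<beta> * (t / 2) powr (-\<beta>))"
        using Suc.IH[of "t / 2"] Suc.prems by (intro mult_left_mono) auto
      also have "\<dots> = B * (2 * t\<^sub>0) powr \<beta> * t powr (-\<beta>)"
        using Suc.prems by (simp add: powr_divide)
      finally show ?thesis .
    qed
  qed
  moreover obtain k :: nat where "t / t\<^sub>0 < 2 ^ k"
    using real_arch_pow[of 2 "t / t\<^sub>0"] by auto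
  then have "t < 2 ^ k * t\<^sub>0"
    using \<open>t\<^sub>0 > 0\<close> by (simp add: divide_less_eq)
  ultimately show ?thesis
    using \<open>t > 0\<close> by blast
qed

lemma regularly_varying_powr_bound:
  fixes F L :: "real \<Rightarrow> real"
  assumes "slowly_varying L" and F: "\<And>t. t > 0 \<Longrightarrow> F t = L t * t powr (-\<gamma>)"
    and bounded: "\<And>t. t > 0 \<Longrightarrow> F t \<le> B" and "0 \<le> B" and "0 \<le> \<beta>" "\<beta> < \<gamma>"
  obtains K where "\<And>t. t > 0 \<Longrightarrow> F t \<le> K * t powr (-\<beta>)"
proof -
  obtain t\<^sub>1 where t\<^sub>1: "\<And>t. t \<ge> t\<^sub>1 \<Longrightarrow> L (2 * t) \<le> 2 powr (\<gamma> - \<beta>) * L t"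
    using slowly_varying_eventually_le[OF \<open>slowly_varying L\<close>, of 2 "2 powr (\<gamma> - \<beta>)"] \<open>\<beta> < \<gamma>\<close>
    by (auto simp: eventually_at_top_linorder)
  define t\<^sub>0 where "t\<^sub>0 = max t\<^sub>1 1"
  have "t\<^sub>0 > 0" by (simp add: t\<^sub>0_def)
  have doubling: "F (2 * t) \<le> 2 powr (-\<beta>) * F t" if "t \<ge> t\<^sub>0" for t
  proof -
    have "t > 0" "t \<ge> t\<^sub>1" using that by (auto simp: t\<^sub>0_def)
    have "F (2 * t) = L (2 * t) * (2 * t) powr (-\<gamma>)"
      using \<open>t > 0\<close> by (simp add: F)
    also have "\<dots> \<le> 2 powr (\<gamma> - \<beta>) * L t * (2 * t) powr (-\<gamma>)"
      using t\<^sub>1[OF \<open>t \<ge> t\<^sub>1\<close>] by (intro mult_right_mono) auto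
    also have "\<dots> = (2 powr (\<gamma> - \<beta>) * 2 powr (-\<gamma>)) * (L t * t powr (-\<gamma>))"
      using \<open>t > 0\<close> by (simp add: powr_mult)
    also have "\<dots> = 2 powr (-\<beta>) * F t"
      using \<open>t > 0\<close> by (simp add: F powr_add[symmetric])
    finally show ?thesis .
  qed
  have "F t \<le> B * (2 * t\<^sub>0) powr \<beta> * t powr (-\<beta>)" if "t > 0" for t
    by (rule doubling_decay_imp_powr_bound[where F = F, OF bounded \<open>0 \<le> B\<close> \<open>0 \<le> \<beta>\<close> \<open>t\<^sub>0 > 0\<close> doubling that])
  then show ?thesis using that by blast
qed

lemma measure_gt_eq_of_distr_eq:
  fixes X Y :: "'a \<Rightarrow> real"
  assumes "distr M borel X = distr M borel Y"
    and [measurable]: "X \<in> borel_measurable M" "Y \<in> borel_measurable M"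
  shows "measure M {x \<in> space M. X x > t} = measure M {x \<in> space M. Y x > t}"
proof -
  have "measure (distr M borel X) {t<..} = measure (distr M borel Y) {t<..}"
    by (simp only: assms(1))
  then show ?thesis
    by (simp add: measure_distr vimage_def Int_def conj_commute)
qed

lemma (in prob_space) regularly_varying_tail_powr_bound:
  fixes X :: "'i \<Rightarrow> 'a \<Rightarrow> real"
  assumes rv: "\<And>i. X i \<in> borel_measurable M"
    and ident: "\<And>i. distr M borel (X i) = distr M borel (X i\<^sub>0)"
    and "slowly_varying L"
    and tail: "\<And>t. t > 0 \<Longrightarrow> prob {x \<in> space M. X i\<^sub>0 x > t} = L t * t powr (-\<gamma>)"
    and "0 \<le> \<beta>" "\<beta> < \<gamma>"
  obtains K where "K \<ge> 0" "\<And>i t. t > 0 \<Longrightarrow> prob {x \<in> space M. X i x > t} \<le> K * t powr (-\<beta>)"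
proof -
  have "\<And>t. t > 0 \<Longrightarrow> prob {x \<in> space M. X i\<^sub>0 x > t} \<le> 1"
    by simp
  then obtain K where K: "\<And>t. t > 0 \<Longrightarrow> prob {x \<in> space M. X i\<^sub>0 x > t} \<le> K * t powr (-\<beta>)"
    using regularly_varying_powr_bound[OF \<open>slowly_varying L\<close> tail _ zero_le_one \<open>0 \<le> \<beta>\<close> \<open>\<beta> < \<gamma>\<close>]
    by blast
  have "K \<ge> 0"
    using order_trans[OF measure_nonneg K[of 1]] by simp
  moreover have "prob {x \<in> space M. X i x > t} \<le> K * t powr (-\<beta>)" if "t > 0" for i t
    using K[OF that] measure_gt_eq_of_distr_eq[OF ident[of i] rv rv, of t] by simp
  ultimately show thesis
    using that by blast
qed

lemma min_le_dyadic_sum: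
  fixes z a :: real
  assumes "a \<ge> 0"
  shows "min z a \<le> min z (a / 2 ^ N) + (\<Sum>k<N. a / 2 ^ k * of_bool (z > a / 2 ^ Suc k))"
proof (induction N)
  case 0
  then show ?case by simp
next
  case (Suc N)
  have "min z (a / 2 ^ N) \<le> min z (a / 2 ^ Suc N) + a / 2 ^ N * of_bool (z > a / 2 ^ Suc N)"
    using \<open>a \<ge> 0\<close> by (cases "z > a / 2 ^ Suc N") (auto simp: min_def field_simps)
  with Suc.IH show ?case by simp
qed

lemma (in prob_space) expectation_min_le_dyadic_sum:
  fixes Z :: "'a \<Rightarrow> real"
  assumes [measurable]: "Z \<in> borel_measurable M"
    and nonneg: "\<And>x. x \<in> space M \<Longrightarrow> Z x \<ge> 0" and "a \<ge> 0"
  shows "expectation (\<lambda>x. min (Z x) a)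
    \<le> a / 2 ^ N + (\<Sum>k<N. a / 2 ^ k * prob {x \<in> space M. Z x > a / 2 ^ Suc k})"
proof -
  define A where "A k = {x \<in> space M. Z x > a / 2 ^ Suc k}" for k
  have [measurable]: "A k \<in> sets M" for k
    unfolding A_def by measurable
  have int_A: "integrable M (\<lambda>x. a / 2 ^ k * indicator (A k) x :: real)" for k
    by (intro integrable_mult_right integrable_real_indicator) (auto simp: emeasure_eq_measure)
  have "expectation (\<lambda>x. min (Z x) a)
      \<le> expectation (\<lambda>x. a / 2 ^ N + (\<Sum>k<N. a / 2 ^ k * indicator (A k) x))"
  proof (rule integral_mono)
    show "integrable M (\<lambda>x. min (Z x) a)"
      by (rule integrable_const_bound[where B = a]) (use nonneg \<open>a \<ge> 0\<close> in auto)
    show "integrable M (\<lambda>x. a / 2 ^ N + (\<Sum>k<N. a / 2 ^ k * indicator (A k) x))"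
      using int_A by auto
    show "min (Z x) a \<le> a / 2 ^ N + (\<Sum>k<N. a / 2 ^ k * indicator (A k) x)" if "x \<in> space M" for x
      using min_le_dyadic_sum[of a "Z x" N] \<open>a \<ge> 0\<close> that by (simp add: A_def indicator_def)
  qed
  also have "\<dots> = a / 2 ^ N + (\<Sum>k<N. a / 2 ^ k * prob (A k))"
    using int_A
    by (simp add: Bochner_Integration.integral_add Bochner_Integration.integral_sum prob_space)
  finally show ?thesis
    unfolding A_def .
qed

lemma dyadic_layer_powr_eq:
  fixes a \<beta> :: real
  assumes "a > 0"
  shows "a / 2 ^ k * (a / 2 ^ Suc k) powr (-\<beta>)
    = 2 powr \<beta> * a powr (1 - \<beta>) * (2 powr (\<beta> - 1)) ^ k"
proof -
  have pow2_powr: "(2 ^ n :: real) powr \<beta> = (2 powr \<beta>) ^ n" for n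
    by (metis powr_power powr_powr powr_realpow mult.commute zero_less_numeral zero_neq_numeral)
  have "(a / 2 ^ Suc k) powr (-\<beta>) = a powr (-\<beta>) * (2 powr \<beta>) ^ Suc k"
    using pow2_powr[of "Suc k"] by (subst powr_divide) (auto simp: powr_minus field_simps)
  then have "a / 2 ^ k * (a / 2 ^ Suc k) powr (-\<beta>)
      = 2 powr \<beta> * (a * a powr (-\<beta>)) * ((2 powr \<beta>) ^ k / 2 ^ k)"
    by (simp add: ac_simps)
  also have "a * a powr (-\<beta>) = a powr (1 - \<beta>)"
    using \<open>a > 0\<close> by (simp add: powr_diff powr_minus_divide)
  also have "(2 powr \<beta>) ^ k / 2 ^ k = (2 powr (\<beta> - 1)) ^ k"
    by (simp add: powr_diff power_divide)
  finally show ?thesis .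
qed

lemma (in prob_space) expectation_min_le_powr:
  fixes Z :: "'a \<Rightarrow> real"
  assumes Z_meas: "Z \<in> borel_measurable M"
    and nonneg: "\<And>x. x \<in> space M \<Longrightarrow> Z x \<ge> 0"
    and tail: "\<And>t. t > 0 \<Longrightarrow> prob {x \<in> space M. Z x > t} \<le> K * t powr (-\<beta>)"
    and "\<beta> < 1" "a > 0"
  shows "expectation (\<lambda>x. min (Z x) a)
    \<le> K * 2 powr \<beta> / (1 - 2 powr (\<beta> - 1)) * a powr (1 - \<beta>)"
proof -
  define q where "q = 2 powr (\<beta> - 1)"
  have "q < 1"
    unfolding q_def using \<open>\<beta> < 1\<close> by (intro powr_less_one) auto
  define C where "C = K * 2 powr \<beta> / (1 - q) * a powr (1 - \<beta>)"
  have "K \<ge> 0"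
    using order_trans[OF measure_nonneg tail[of 1]] by simp
  have layer: "a / 2 ^ k * prob {x \<in> space M. Z x > a / 2 ^ Suc k}
      \<le> K * 2 powr \<beta> * a powr (1 - \<beta>) * q ^ k" for k
  proof -
    have "prob {x \<in> space M. Z x > a / 2 ^ Suc k} \<le> K * (a / 2 ^ Suc k) powr (-\<beta>)"
      using \<open>a > 0\<close> by (intro tail) simp
    then have "a / 2 ^ k * prob {x \<in> space M. Z x > a / 2 ^ Suc k}
        \<le> a / 2 ^ k * (K * (a / 2 ^ Suc k) powr (-\<beta>))"
      using \<open>a > 0\<close> by (intro mult_left_mono) auto
    also have "\<dots> = K * (a / 2 ^ k * (a / 2 ^ Suc k) powr (-\<beta>))"
      by (rule mult.left_commute)
    finally show ?thesis
      unfolding q_def dyadic_layer_powr_eq[OF \<open>a > 0\<close>] by (simp only: mult.assoc)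
  qed
  have "expectation (\<lambda>x. min (Z x) a) \<le> a / 2 ^ N + C" for N
  proof -
    have "(\<Sum>k<N. a / 2 ^ k * prob {x \<in> space M. Z x > a / 2 ^ Suc k})
        \<le> (\<Sum>k<N. K * 2 powr \<beta> * a powr (1 - \<beta>) * q ^ k)"
      by (intro sum_mono layer)
    also have "\<dots> = K * 2 powr \<beta> * a powr (1 - \<beta>) * ((1 - q ^ N) / (1 - q))"
      using \<open>q < 1\<close> by (simp add: sum_distrib_left[symmetric] sum_gp_strict)
    also have "\<dots> \<le> C"
      unfolding C_def using \<open>q < 1\<close> \<open>K \<ge> 0\<close>
      by (auto intro!: mult_left_mono divide_right_mono simp: q_def field_simps)
    finally show ?thesis
      using expectation_min_le_dyadic_sum[OF Z_meas nonneg less_imp_le[OF \<open>a > 0\<close>], of N]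
      by linarith
  qed
  moreover have "(\<lambda>N. a / 2 ^ N + C) \<longlonglongrightarrow> 0 + C"
    by (intro tendsto_add tendsto_divide_0[OF tendsto_const] filterlim_realpow_sequentially_gt1) auto
  ultimately have "expectation (\<lambda>x. min (Z x) a) \<le> C"
    by (intro LIMSEQ_le_const[where X = "\<lambda>N. a / 2 ^ N + C"]) auto
  then show ?thesis
    unfolding C_def q_def .
qed

lemma (in prob_space) indep_vars_expectation_mult:
  fixes Y :: "'i \<Rightarrow> 'a \<Rightarrow> real"
  assumes "indep_vars (\<lambda>_. borel) Y J" "i \<in> J" "j \<in> J" "i \<noteq> j"
    and "integrable M (Y i)" "integrable M (Y j)"
  shows "expectation (\<lambda>x. Y i x * Y j x) = expectation (Y i) * expectation (Y j)"
proof -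
  have "indep_vars (\<lambda>_. borel) Y {i, j}"
    using indep_vars_subset[OF assms(1)] assms(2,3) by auto
  then have "expectation (\<lambda>x. \<Prod>k\<in>{i, j}. Y k x) = (\<Prod>k\<in>{i, j}. expectation (Y k))"
    using assms(5,6) by (intro indep_vars_lebesgue_integral) auto
  then show ?thesis
    using \<open>i \<noteq> j\<close> by simp
qed

lemma (in prob_space) expectation_sq_sum_indep_le:
  fixes Y :: "'i \<Rightarrow> 'a \<Rightarrow> real" and a m :: real
  assumes "finite J" and indep: "indep_vars (\<lambda>_. borel) Y J"
    and bounds: "\<And>j x. j \<in> J \<Longrightarrow> x \<in> space M \<Longrightarrow> 0 \<le> Y j x \<and> Y j x \<le> a"
    and mean: "\<And>j. j \<in> J \<Longrightarrow> expectation (Y j) \<le> m"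
  shows "expectation (\<lambda>x. (\<Sum>j\<in>J. Y j x)\<^sup>2) \<le> card J * a * m + (card J * m)\<^sup>2"
proof -
  have [measurable]: "Y j \<in> borel_measurable M" if "j \<in> J" for j
    using indep that by (simp add: indep_vars_def)
  have int: "integrable M (Y j)" if "j \<in> J" for j
    by (rule integrable_const_bound[where B = a]) (use bounds that in auto)
  have mean_nonneg: "0 \<le> expectation (Y j)" if "j \<in> J" for j
    using bounds that by (intro integral_nonneg_AE AE_I2) auto
  have a_m_nonneg: "a \<ge> 0" "m \<ge> 0" if "j \<in> J" for j
    using bounds[OF that] mean[OF that] mean_nonneg[OF that] not_empty by (force, linarith)
  have int_prod: "integrable M (\<lambda>x. Y i x * Y j x)" if "i \<in> J" "j \<in> J" for i j
    by (rule integrable_const_bound[where B = "a * a"])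
      (use bounds a_m_nonneg that in \<open>auto intro!: AE_I2 mult_mono simp: abs_mult\<close>)
  have pair: "expectation (\<lambda>x. Y i x * Y j x) \<le> (if i = j then a * m else 0) + m * m"
    if "i \<in> J" "j \<in> J" for i j
  proof (cases "i = j")
    case True
    have "expectation (\<lambda>x. Y j x * Y j x) \<le> expectation (\<lambda>x. a * Y j x)"
      using bounds that
      by (intro integral_mono int_prod int integrable_mult_right) (auto intro: mult_right_mono)
    also have "\<dots> \<le> a * m"
      using mean a_m_nonneg that by (simp add: mult_left_mono)
    finally show ?thesis
      using True a_m_nonneg that by (simp add: add_increasing2)
  next
    case False
    then have "expectation (\<lambda>x. Y i x * Y j x) = expectation (Y i) * expectation (Y j)"
      using that int by (intro indep_vars_expectation_mult[OF indep])
    also have "\<dots> \<le> m * m"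
      using mean mean_nonneg a_m_nonneg that by (intro mult_mono) auto
    finally show ?thesis
      using False by simp
  qed
  have "expectation (\<lambda>x. (\<Sum>j\<in>J. Y j x)\<^sup>2) = (\<Sum>i\<in>J. \<Sum>j\<in>J. expectation (\<lambda>x. Y i x * Y j x))"
    by (simp add: power2_eq_square sum_product int_prod Bochner_Integration.integral_sum
        Bochner_Integration.integrable_sum)
  also have "\<dots> \<le> (\<Sum>i\<in>J. \<Sum>j\<in>J. (if i = j then a * m else 0) + m * m)"
    by (intro sum_mono pair)
  also have "\<dots> = card J * a * m + (card J * m)\<^sup>2"
    using \<open>finite J\<close> by (simp add: sum.distrib power2_eq_square algebra_simps)
  finally show ?thesis .
qed

lemma (in prob_space) expectation_sq_sum_min_le:
  fixes X :: "'i \<Rightarrow> 'a \<Rightarrow> real"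
  assumes "finite J" and indep: "indep_vars (\<lambda>_. borel) X J"
    and nonneg: "\<And>j x. j \<in> J \<Longrightarrow> x \<in> space M \<Longrightarrow> 0 \<le> X j x"
    and tail: "\<And>j t. j \<in> J \<Longrightarrow> t > 0 \<Longrightarrow>
      prob {x \<in> space M. X j x > t} \<le> K * t powr (-\<beta>)"
    and "\<beta> < 1" "a > 0" "b > 0"
  defines "\<mu> \<equiv>
    card J * (K * 2 powr \<beta> / (1 - 2 powr (\<beta> - 1)) * a powr (1 - \<beta>) * b powr (-\<beta>))"
  shows "expectation (\<lambda>x. (\<Sum>j\<in>J. min (X j x / b) a)\<^sup>2) \<le> a * \<mu> + \<mu>\<^sup>2"
proof -
  define m where "m = K * 2 powr \<beta> / (1 - 2 powr (\<beta> - 1)) * a powr (1 - \<beta>) * b powr (-\<beta>)"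
  have [measurable]: "X j \<in> borel_measurable M" if "j \<in> J" for j
    using indep that by (simp add: indep_vars_def)
  have "expectation (\<lambda>x. min (X j x / b) a) \<le> m" if "j \<in> J" for j
  proof -
    have "prob {x \<in> space M. X j x / b > t} \<le> K * b powr (-\<beta>) * t powr (-\<beta>)"
      if "t > 0" for t
    proof -
      have "{x \<in> space M. X j x / b > t} = {x \<in> space M. X j x > b * t}"
        using \<open>b > 0\<close> by (auto simp: field_simps)
      then show ?thesis
        using tail[of j "b * t"] \<open>j \<in> J\<close> \<open>b > 0\<close> \<open>t > 0\<close>
        by (simp add: powr_mult mult.assoc)
    qed
    then show ?thesis
      using expectation_min_le_powr[of "\<lambda>x. X j x / b" "K * b powr (-\<beta>)" \<beta> a]
        nonneg \<open>j \<in> J\<close> \<open>\<beta> < 1\<close> \<open>a > 0\<close> \<open>b > 0\<close>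
      by (simp add: m_def ac_simps)
  qed
  moreover have "indep_vars (\<lambda>_. borel) (\<lambda>j x. min (X j x / b) a) J"
    by (rule indep_vars_compose2[OF indep]) auto
  ultimately have "expectation (\<lambda>x. (\<Sum>j\<in>J. min (X j x / b) a)\<^sup>2)
      \<le> card J * a * m + (card J * m)\<^sup>2"
    using nonneg \<open>a > 0\<close> \<open>b > 0\<close> \<open>finite J\<close>
    by (intro expectation_sq_sum_indep_le) auto
  then show ?thesis
    by (simp add: \<mu>_def m_def ac_simps)
qed

lemma powr_add_sq_le:
  fixes x c e s :: real
  assumes "x \<ge> 1" "c \<ge> 0" "e \<le> s" "2 * e \<le> s"
  shows "c * x powr e + (c * x powr e)\<^sup>2 \<le> (c + c\<^sup>2) * x powr s"
proof -
  have "(c * x powr e)\<^sup>2 = c\<^sup>2 * x powr (2 * e)"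
    using \<open>x \<ge> 1\<close> by (simp add: power_mult_distrib powr_power)
  moreover have "x powr e \<le> x powr s" "x powr (2 * e) \<le> x powr s"
    using assms by (auto intro: powr_mono)
  ultimately show ?thesis
    using \<open>c \<ge> 0\<close> by (simp add: distrib_right add_mono mult_left_mono)
qed

lemma (in prob_space) expectation_sq_sum_rescaled_min_le:
  fixes X :: "nat \<Rightarrow> 'a \<Rightarrow> real" and n :: nat
  assumes indep: "indep_vars (\<lambda>_. borel) X {1..n}" and "n \<ge> 1"
    and nonneg: "\<And>j x. x \<in> space M \<Longrightarrow> 0 \<le> X j x"
    and tail: "\<And>j t. t > 0 \<Longrightarrow> prob {x \<in> space M. X j x > t} \<le> K * t powr (-\<beta>)"
    and "K \<ge> 0" "\<beta> < 1" "0 \<le> p" "\<gamma> > 0"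
  defines "c \<equiv> K * 2 powr \<beta> / (1 - 2 powr (\<beta> - 1))"
    and "e \<equiv> 1 - p * (1 - \<beta>) / \<gamma> - \<beta> / \<gamma>"
  assumes "e \<le> s" "2 * e \<le> s"
  shows "expectation
      (\<lambda>x. (\<Sum>j=1..n. min (X j x / real n powr (1/\<gamma>)) (real n powr (-p/\<gamma>)))\<^sup>2)
    \<le> (c + c\<^sup>2) * real n powr s"
proof -
  let ?a = "real n powr (-p/\<gamma>)" and ?b = "real n powr (1/\<gamma>)"
  let ?\<mu> = "real (card {1..n}) * (c * ?a powr (1 - \<beta>) * ?b powr (-\<beta>))"
  have "c \<ge> 0"
    using \<open>K \<ge> 0\<close> powr_less_one[of 2 "\<beta> - 1"] \<open>\<beta> < 1\<close> by (simp add: c_def)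
  have "?\<mu>
      = c * (real n powr 1 * real n powr (-p/\<gamma> * (1 - \<beta>)) * real n powr (1/\<gamma> * (-\<beta>)))"
    using \<open>n \<ge> 1\<close> by (simp add: powr_powr)
  also have "\<dots> = c * real n powr (1 + -p/\<gamma> * (1 - \<beta>) + 1/\<gamma> * (-\<beta>))"
    by (simp only: powr_add)
  also have "1 + -p/\<gamma> * (1 - \<beta>) + 1/\<gamma> * (-\<beta>) = e"
    by (simp add: e_def field_simps)
  finally have \<mu>: "?\<mu> = c * real n powr e" .
  have "expectation (\<lambda>x. (\<Sum>j=1..n. min (X j x / ?b) ?a)\<^sup>2) \<le> ?a * ?\<mu> + ?\<mu>\<^sup>2"
    unfolding c_def
    by (rule expectation_sq_sum_min_le[OF finite_atLeastAtMost indep])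
      (use nonneg tail \<open>\<beta> < 1\<close> \<open>n \<ge> 1\<close> in auto)
  also have "\<dots> \<le> c * real n powr e + (c * real n powr e)\<^sup>2"
  proof -
    have "?a \<le> 1"
      using powr_mono[of "-p/\<gamma>" 0 "real n"] \<open>n \<ge> 1\<close> \<open>0 \<le> p\<close> \<open>\<gamma> > 0\<close> by simp
    with \<open>c \<ge> 0\<close> show ?thesis
      unfolding \<mu> by (intro add_right_mono mult_left_le_one_le) auto
  qed
  also have "\<dots> \<le> (c + c\<^sup>2) * real n powr s"
    using powr_add_sq_le \<open>n \<ge> 1\<close> \<open>c \<ge> 0\<close> \<open>e \<le> s\<close> \<open>2 * e \<le> s\<close> by simp
  finally show ?thesis .
qed

lemma exists_potter_exponent:
  fixes p \<gamma> \<epsilon> :: real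
  assumes "0 \<le> p" "0 < \<gamma>" "\<gamma> \<le> 1" "\<epsilon> > 0"
  obtains \<beta> where "0 < \<beta>" "\<beta> < \<gamma>"
    and "1 - p * (1 - \<beta>) / \<gamma> - \<beta> / \<gamma> \<le> -p * (1/\<gamma> - 1) + \<epsilon>"
    and "2 * (1 - p * (1 - \<beta>) / \<gamma> - \<beta> / \<gamma>) \<le> -p * (1/\<gamma> - 1) + \<epsilon>"
proof
  define r where "r = max (1/2) (1 - \<epsilon>/2)"
  have r: "0 < r" "r < 1" "1 - r \<le> \<epsilon>/2"
    using \<open>\<epsilon> > 0\<close> by (auto simp: r_def max_def)
  have gap: "(1 - p * (1 - \<gamma> * r) / \<gamma> - \<gamma> * r / \<gamma>) - (-p * (1/\<gamma> - 1))
      = (1 - p) * (1 - r)"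
    using \<open>\<gamma> > 0\<close> by (simp add: field_simps)
  have "(1 - p) * (1 - r) \<le> 1 * (\<epsilon>/2)"
    using r \<open>0 \<le> p\<close> by (intro mult_mono) auto
  moreover have "1/\<gamma> - 1 \<ge> 0"
    using assms by (simp add: field_simps)
  then have "-p * (1/\<gamma> - 1) \<le> 0"
    using \<open>0 \<le> p\<close> by simp
  ultimately have "e \<le> T + \<epsilon> \<and> 2 * e \<le> T + \<epsilon>"
    if "e - T = (1 - p) * (1 - r)" "T = -p * (1/\<gamma> - 1)" for e T
    using that \<open>\<epsilon> > 0\<close> by linarith
  from this[OF gap refl]
  show "1 - p * (1 - \<gamma> * r) / \<gamma> - \<gamma> * r / \<gamma> \<le> -p * (1/\<gamma> - 1) + \<epsilon>"
    and "2 * (1 - p * (1 - \<gamma> * r) / \<gamma> - \<gamma> * r / \<gamma>) \<le> -p * (1/\<gamma> - 1) + \<epsilon>"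
    by auto
  show "0 < \<gamma> * r" "\<gamma> * r < \<gamma>"
    using r \<open>\<gamma> > 0\<close> by auto
qed

theorem lemmaA3:
  fixes M :: "'a measure" and X :: "nat \<Rightarrow> 'a \<Rightarrow> real" and \<gamma> :: real
  assumes "prob_space M"
    and rv: "\<And>i. X i \<in> borel_measurable M"
    and indep: "prob_space.indep_vars M (\<lambda>_. borel) X UNIV"
    and ident: "\<And>i. distr M borel (X i) = distr M borel (X 1)"
    and nonneg: "\<And>i x. x \<in> space M \<Longrightarrow> X i x \<ge> 0"
    and \<gamma>: "0 < \<gamma>" "\<gamma> < 1"
    and tail: "\<exists>L. slowly_varying L \<and>
                 (\<forall>t>0. measure M {x \<in> space M. X 1 x > t} = L t * t powr (-\<gamma>))"
  shows "\<forall>p. 0 < p \<and> p < 1 \<longrightarrow> (\<forall>\<epsilon>>0. \<exists>C>0. \<forall>n::nat. n \<ge> 1 \<longrightarrow>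
           prob_space.expectation M
             (\<lambda>x. (\<Sum>j=1..n. min (X j x / real n powr (1/\<gamma>)) (real n powr (-p/\<gamma>)))\<^sup>2)
           \<le> C * real n powr (-p * (1/\<gamma> - 1) + \<epsilon>))"
proof (intro allI impI)
  interpret prob_space M by fact
  fix p \<epsilon> :: real
  assume "0 < p \<and> p < 1" "\<epsilon> > 0"
  let ?e = "\<lambda>\<beta>. 1 - p * (1 - \<beta>) / \<gamma> - \<beta> / \<gamma>" and ?s = "-p * (1/\<gamma> - 1) + \<epsilon>"
  obtain \<beta> where \<beta>: "0 < \<beta>" "\<beta> < \<gamma>" and e: "?e \<beta> \<le> ?s" "2 * ?e \<beta> \<le> ?s"
    using exists_potter_exponent[of p \<gamma> \<epsilon>] \<open>0 < p \<and> p < 1\<close> \<open>\<epsilon> > 0\<close> \<gamma> by auto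
  obtain L where L: "slowly_varying L"
    and L_tail: "\<And>t. t > 0 \<Longrightarrow> prob {x \<in> space M. X 1 x > t} = L t * t powr (-\<gamma>)"
    using tail by blast
  obtain K where "K \<ge> 0"
    and tail_X: "\<And>j t. t > 0 \<Longrightarrow> prob {x \<in> space M. X j x > t} \<le> K * t powr (-\<beta>)"
    using regularly_varying_tail_powr_bound[where X = X and i\<^sub>0 = 1,
        OF rv ident L L_tail less_imp_le[OF \<beta>(1)] \<beta>(2)]
    by blast
  define c where "c = K * 2 powr \<beta> / (1 - 2 powr (\<beta> - 1))"
  have "expectation (\<lambda>x. (\<Sum>j=1..n. min (X j x / real n powr (1/\<gamma>)) (real n powr (-p/\<gamma>)))\<^sup>2)
      \<le> (c + c\<^sup>2) * real n powr ?s" if "n \<ge> 1" for n :: nat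
    unfolding c_def using that indep_vars_subset[OF indep, of "{1..n}"] nonneg tail_X \<open>K \<ge> 0\<close>
      \<beta> \<gamma> \<open>0 < p \<and> p < 1\<close> e
    by (intro expectation_sq_sum_rescaled_min_le) auto
  moreover have "(c + c\<^sup>2) * real n powr ?s \<le> (c + c\<^sup>2 + 1) * real n powr ?s" for n :: nat
    by (simp add: distrib_right)
  moreover have "c + c\<^sup>2 + 1 > 0"
    using zero_le_power2[of "c + 1/2"] by (simp add: power2_eq_square algebra_simps)
  ultimately show "\<exists>C>0. \<forall>n::nat. n \<ge> 1 \<longrightarrow>
      expectation (\<lambda>x. (\<Sum>j=1..n. min (X j x / real n powr (1/\<gamma>)) (real n powr (-p/\<gamma>)))\<^sup>2)
      \<le> C * real n powr ?s"
    by (blast intro: order_trans)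
qed

end
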